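(* Let $A$ be an associative unital algebra over a field $k$ of characteristic zero and $\delta$ a locally nilpotent $k$-linear derivation of $A$ such that $\delta(x)=1$ for some $x\in A$. Then the following are equivalent: (a) $A^\delta$ is a left Ore domain; (b) $A$ is a left Ore domain; (c) $A$ is a critically compressible left $A[z;\delta]$-module.
   Context: $A^\delta=\ker\delta$. $\delta$ locally nilpotent means for every $a$ there is $n>0$ with $\delta^n(a)=0$. $A[z;\delta]$ is the differential operator ring ($A[z]$ as left $A$-module, $za=az+\delta(a)$), acting on $A$ by $(\sum_i a_iz^i)\cdot x=\sum_ia_i\delta^i(x)$. A left Ore domain is a domain $S$ with $Sa\cap Sb\neq0$ for nonzero $a,b$. A nonzero module is critically compressible if it embeds into each of its nonzero submodules and into none of its factor modules $M/N$ with $N\neq0$. *)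

theory Defs
  imports Complex_Main
begin

definition k_algebra :: "('k::field_char_0 \<Rightarrow> 'a::ring_1 \<Rightarrow> 'a) \<Rightarrow> bool" where
  "k_algebra smult \<longleftrightarrow> module smult \<and>
     (\<forall>c a b. smult c (a * b) = smult c a * b \<and> smult c (a * b) = a * smult c b)"

definition k_derivation :: "('k \<Rightarrow> 'a::ring_1 \<Rightarrow> 'a) \<Rightarrow> ('a \<Rightarrow> 'a) \<Rightarrow> bool" where
  "k_derivation smult d \<longleftrightarrow>
     (\<forall>a b. d (a + b) = d a + d b) \<and>
     (\<forall>c a. d (smult c a) = smult c (d a)) \<and>
     (\<forall>a b. d (a * b) = d a * b + a * d b)"

definition locally_nilpotent :: "('a::zero \<Rightarrow> 'a) \<Rightarrow> bool" where
  "locally_nilpotent d \<longleftrightarrow> (\<forall>a. \<exists>n>0. (d ^^ n) a = 0)"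

definition constants :: "('a::zero \<Rightarrow> 'a) \<Rightarrow> 'a set" where
  "constants d = {a. d a = 0}"

definition left_ore_domain_on :: "'a::ring_1 set \<Rightarrow> bool" where
  "left_ore_domain_on S \<longleftrightarrow>
     (1::'a) \<noteq> 0 \<and>
     (\<forall>a\<in>S. \<forall>b\<in>S. a * b = 0 \<longrightarrow> a = 0 \<or> b = 0) \<and>
     (\<forall>a\<in>S. \<forall>b\<in>S. a \<noteq> 0 \<longrightarrow> b \<noteq> 0 \<longrightarrow> (\<exists>s\<in>S. \<exists>t\<in>S. s * a = t * b \<and> s * a \<noteq> 0))"

text \<open>Action of the differential operator sum_i cs!i z^i of A[z;delta] on A.\<close>
definition dop_act :: "('a::ring_1 \<Rightarrow> 'a) \<Rightarrow> 'a list \<Rightarrow> 'a \<Rightarrow> 'a" where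
  "dop_act d cs x = (\<Sum>i<length cs. cs ! i * (d ^^ i) x)"

definition dsubmodule :: "('a::ring_1 \<Rightarrow> 'a) \<Rightarrow> 'a set \<Rightarrow> bool" where
  "dsubmodule d N \<longleftrightarrow> 0 \<in> N \<and> (\<forall>x\<in>N. \<forall>y\<in>N. x + y \<in> N) \<and>
     (\<forall>cs. \<forall>x\<in>N. dop_act d cs x \<in> N)"

definition dmod_hom :: "('a::ring_1 \<Rightarrow> 'a) \<Rightarrow> ('a \<Rightarrow> 'a) \<Rightarrow> bool" where
  "dmod_hom d f \<longleftrightarrow> (\<forall>x y. f (x + y) = f x + f y) \<and>
     (\<forall>cs x. f (dop_act d cs x) = dop_act d cs (f x))"

definition embeds_into_sub :: "('a::ring_1 \<Rightarrow> 'a) \<Rightarrow> 'a set \<Rightarrow> bool" where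
  "embeds_into_sub d N \<longleftrightarrow> (\<exists>f. dmod_hom d f \<and> inj f \<and> range f \<subseteq> N)"

text \<open>A map A \<rightarrow> A/N is represented by a lift
  f : A \<rightarrow> A (f x is a representative of the image coset of x); it is a module
  homomorphism iff the defining identities hold modulo N, and injective iff
  f x \<in> N implies x = 0.\<close>
definition embeds_into_factor :: "('a::ring_1 \<Rightarrow> 'a) \<Rightarrow> 'a set \<Rightarrow> bool" where
  "embeds_into_factor d N \<longleftrightarrow> (\<exists>f.
     (\<forall>x y. f (x + y) - (f x + f y) \<in> N) \<and>
     (\<forall>cs x. f (dop_act d cs x) - dop_act d cs (f x) \<in> N) \<and>
     (\<forall>x. f x \<in> N \<longrightarrow> x = 0))"

definition critically_compressible :: "('a::ring_1 \<Rightarrow> 'a) \<Rightarrow> bool" where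
  "critically_compressible d \<longleftrightarrow> (\<exists>x::'a. x \<noteq> 0) \<and>
     (\<forall>N. dsubmodule d N \<longrightarrow> N \<noteq> {0} \<longrightarrow> embeds_into_sub d N) \<and>
     (\<forall>N. dsubmodule d N \<longrightarrow> N \<noteq> {0} \<longrightarrow> \<not> embeds_into_factor d N)"

end

theory Submission
  imports Defs
begin

(* Let D be a locally nilpotent derivation of a ring A without additive torsion (every
   algebra over a field of characteristic zero is such a ring) and C = ker D its ring of
   constants.  Every nonzero v has a top iterate D^m v, which is a nonzero constant, and
   by Leibniz's rule the top iterate of a product a b is a positive integer multiple of the
   product of the top iterates of a and b (leibniz_top).

   (a) => (b): leibniz_top transfers the absence of zero divisors from C to A.  For the Ore
     condition, more than n elements killed by D^n are left linearly dependent over C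
     (constant_dependence, by induction on n from the Ore condition of C).  Applied to
     x^i a and x^i b (i <= N), where D x = 1, this gives s a = t b with s, t polynomials in
     x over C that are not both zero, as the powers of x are independent over C.
   (b) => (a): a relation s a = t b between constants a, b can be moved to the top iterate
     of s, which gives a relation with constant coefficients (constant_coefficients).
   (b) => (c): every nonzero submodule N contains a nonzero constant c; right
     multiplication by c embeds A into N, and the Ore condition rules out an embedding of
     A into A/N.
   (c) => (a): for a nonzero constant d the right annihilator of d and the left ideal A d
     are submodules; compressibility forces d to be regular and yields Ore relations. *)

(* Over a field of characteristic zero an algebra has no additive torsion: scale by 1/n. *)
lemma k_algebra_torsion_free:
  fixes smult :: "'k::field_char_0 \<Rightarrow> 'a::ring_1 \<Rightarrow> 'a" and y :: 'a
  assumes "k_algebra smult" and "0 < n" and "of_nat n * y = 0"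
  shows "y = 0"
proof -
  interpret module smult using assms(1) by (simp add: k_algebra_def)
  have scale_of_nat: "smult (of_nat m) z = of_nat m * z" for m z
    by (induction m) (auto simp: scale_left_distrib distrib_right)
  have "y = smult (inverse (of_nat n)) (smult (of_nat n) y)"
    using assms(2) by simp
  also have "\<dots> = 0" using assms(3) by (simp add: scale_of_nat)
  finally show ?thesis .
qed

lemma sum_bool_pairs:
  fixes c :: "nat \<times> bool \<Rightarrow> 'a::ring_1"
  shows "(\<Sum>j\<in>{..N} \<times> UNIV. c j * (x ^ fst j * (if snd j then a else b))) =
         (\<Sum>i\<le>N. c (i, True) * x ^ i) * a + (\<Sum>i\<le>N. c (i, False) * x ^ i) * b"
proof -
  have "(\<Sum>j\<in>{..N} \<times> UNIV. c j * (x ^ fst j * (if snd j then a else b))) =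
        (\<Sum>i\<le>N. \<Sum>y\<in>UNIV. c (i, y) * (x ^ i * (if y then a else b)))"
    by (simp add: sum.cartesian_product split_def)
  then show ?thesis
    by (simp add: UNIV_bool sum.distrib sum_distrib_right mult.assoc add.commute)
qed

locale lnd = additive D for D :: "'a::ring_1 \<Rightarrow> 'a" +
  assumes leibniz: "D (a * b) = D a * b + a * D b"
    and nilpotent: "\<exists>n>0. (D ^^ n) a = 0"
    and torsion_free: "0 < n \<Longrightarrow> of_nat n * (y::'a) = 0 \<Longrightarrow> y = 0"
begin

sublocale iterate: additive "D ^^ n" for n
  by unfold_locales (induction n, auto simp: add)

declare zero [simp] iterate.zero [simp]

lemma D_one [simp]: "D 1 = 0"
  using leibniz[of 1 1] by simp

lemma iterate_const_left: "D c = 0 \<Longrightarrow> (D ^^ n) (c * v) = c * (D ^^ n) v"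
  by (induction n) (auto simp: leibniz)

lemma iterate_const_right: "D c = 0 \<Longrightarrow> (D ^^ n) (v * c) = (D ^^ n) v * c"
  by (induction n) (auto simp: leibniz)

lemma iterate_D: "(D ^^ n) (D v) = (D ^^ Suc n) v"
  by (simp only: funpow_Suc_right o_apply)

lemma iterate_vanish_mono:
  assumes "(D ^^ n) v = 0" and "n \<le> m"
  shows "(D ^^ m) v = 0"
proof -
  have "(D ^^ m) v = (D ^^ (m - n)) ((D ^^ n) v)"
    using assms(2) by (metis funpow_add le_add_diff_inverse2 o_apply)
  then show ?thesis using assms(1) by simp
qed

lemma top_iterate:
  assumes "v \<noteq> 0"
  obtains m where "(D ^^ Suc m) v = 0" and "(D ^^ m) v \<noteq> 0"
proof -
  obtain p where "(D ^^ p) v = 0" using nilpotent by blast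
  then have "\<exists>m. (D ^^ Suc m) v = 0 \<and> (D ^^ m) v \<noteq> 0"
  proof (induction p)
    case 0
    with assms show ?case by simp
  next
    case (Suc p)
    then show ?case by (cases "(D ^^ p) v = 0") auto
  qed
  with that show ?thesis by blast
qed

(* If D^(k+1) a = 0 and D^(m+1) b = 0 then D^(k+m+1) (a b) = 0 and
   D^(k+m) (a b) = N D^k a D^m b for a positive integer N (namely the binomial
   coefficient (k+m choose k)). *)
lemma leibniz_top:
  assumes "(D ^^ Suc k) a = 0" and "(D ^^ Suc m) b = 0"
  shows "(D ^^ Suc (k + m)) (a * b) = 0 \<and>
         (\<exists>N>0. (D ^^ (k + m)) (a * b) = of_nat N * ((D ^^ k) a * (D ^^ m) b))"
  using assms
proof (induction "k + m" arbitrary: k m a b)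
  case 0
  then show ?case by (auto simp: leibniz intro!: exI[of _ 1])
next
  case (Suc n)
  define P where "P = (D ^^ k) a * (D ^^ m) b"
  have left: "(D ^^ Suc n) (D a * b) = 0 \<and>
      (\<exists>N. (D ^^ n) (D a * b) = of_nat N * P \<and> (0 < k \<longrightarrow> 0 < N))"
  proof (cases k)
    case 0
    with Suc.prems show ?thesis by (auto intro!: exI[of _ 0])
  next
    case (Suc k')
    with Suc.prems Suc.hyps(2) Suc.hyps(1)[of k' m "D a" b]
    show ?thesis by (auto simp: P_def iterate_D)
  qed
  have right: "(D ^^ Suc n) (a * D b) = 0 \<and>
      (\<exists>N. (D ^^ n) (a * D b) = of_nat N * P \<and> (0 < m \<longrightarrow> 0 < N))"
  proof (cases m)
    case 0
    with Suc.prems show ?thesis by (auto intro!: exI[of _ 0])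
  next
    case (Suc m')
    with Suc.prems Suc.hyps(2) Suc.hyps(1)[of k m' a "D b"]
    show ?thesis by (auto simp: P_def iterate_D)
  qed
  have split: "(D ^^ Suc j) (a * b) = (D ^^ j) (D a * b) + (D ^^ j) (a * D b)" for j
    by (simp only: iterate_D[symmetric] leibniz iterate.add)
  obtain N1 N2 where N1: "(D ^^ n) (D a * b) = of_nat N1 * P" "0 < k \<longrightarrow> 0 < N1"
    and N2: "(D ^^ n) (a * D b) = of_nat N2 * P" "0 < m \<longrightarrow> 0 < N2"
    using left right by blast
  have "(D ^^ (k + m)) (a * b) = of_nat (N1 + N2) * P"
    using split[of n] N1(1) N2(1) Suc.hyps(2) by (simp add: distrib_right)
  moreover have "0 < N1 + N2" using N1(2) N2(2) Suc.hyps(2) by auto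
  moreover have "(D ^^ Suc (k + m)) (a * b) = 0"
    using split[of "Suc n"] left right Suc.hyps(2) by simp
  ultimately show ?case unfolding P_def by blast
qed

(* If C has no zero divisors, neither has A: the top iterate of a b = 0 is a positive multiple
   of a product of two nonzero constants. *)
lemma no_zero_divisors_from_constants:
  fixes a b :: 'a
  assumes constants_domain: "\<And>a b. D a = 0 \<Longrightarrow> D b = 0 \<Longrightarrow> a * b = 0 \<Longrightarrow> a = 0 \<or> b = 0"
    and "a * b = 0"
  shows "a = 0 \<or> b = 0"
proof (rule ccontr)
  assume "\<not> (a = 0 \<or> b = 0)"
  then obtain k m where k: "(D ^^ Suc k) a = 0" "(D ^^ k) a \<noteq> 0"
    and m: "(D ^^ Suc m) b = 0" "(D ^^ m) b \<noteq> 0"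
    using top_iterate by metis
  obtain N where "0 < N" and "(D ^^ (k + m)) (a * b) = of_nat N * ((D ^^ k) a * (D ^^ m) b)"
    using leibniz_top[OF k(1) m(1)] by blast
  with \<open>a * b = 0\<close> have "(D ^^ k) a * (D ^^ m) b = 0"
    using torsion_free by simp
  with constants_domain[of "(D ^^ k) a" "(D ^^ m) b"] k m show False by simp
qed

(* A relation s a = t b between regular constants a, b, with s nonzero, can be differentiated up to
   the top iterate of s, which gives a nontrivial relation with constant coefficients. *)
lemma constant_coefficients:
  assumes "s \<noteq> 0" and "D a = 0" and "D b = 0" and "s * a = t * b"
    and regular_a: "\<And>y. y * a = 0 \<Longrightarrow> y = 0"
    and regular_b: "\<And>y. y * b = 0 \<Longrightarrow> y = 0"
  shows "\<exists>s' t'. D s' = 0 \<and> D t' = 0 \<and> s' * a = t' * b \<and> s' * a \<noteq> 0"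
proof -
  obtain m where m: "(D ^^ Suc m) s = 0" "(D ^^ m) s \<noteq> 0"
    using top_iterate[OF assms(1)] by blast
  have relation: "(D ^^ j) s * a = (D ^^ j) t * b" for j
    using assms(4) iterate_const_right[OF assms(2), of j s] iterate_const_right[OF assms(3), of j t]
    by simp
  have "(D ^^ Suc m) t = 0"
    using relation[of "Suc m"] m(1) regular_b by simp
  moreover have "(D ^^ m) s * a \<noteq> 0"
    using m(2) regular_a by blast
  ultimately show ?thesis
    using relation[of m] m(1) by (intro exI[of _ "(D ^^ m) s"] exI[of _ "(D ^^ m) t"]) simp
qed

context
  fixes x assumes Dx: "D x = 1"
begin

(* For D x = 1, the top iterate of x^i is D^i (x^i) = i!, a positive integer. *)
lemma power_top_iterate: "(D ^^ Suc i) (x ^ i) = 0 \<and> (\<exists>M>0. (D ^^ i) (x ^ i) = of_nat M)"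
proof (induction i)
  case 0
  then show ?case by (auto intro!: exI[of _ 1])
next
  case (Suc i)
  then obtain M where M: "0 < M" "(D ^^ i) (x ^ i) = of_nat M" by blast
  have "(D ^^ Suc 1) x = 0" using Dx by simp
  from leibniz_top[OF this conjunct1[OF Suc.IH]] obtain N where
    "0 < N" "(D ^^ Suc i) (x ^ Suc i) = of_nat N * ((D ^^ 1) x * (D ^^ i) (x ^ i))"
    "(D ^^ Suc (Suc i)) (x ^ Suc i) = 0"
    by auto
  with M Dx show ?case by (auto intro!: exI[of _ "N * M"])
qed

lemma powers_independent:
  assumes "\<forall>i<r. D (c i) = 0" and "(\<Sum>i<r. c i * x ^ i) = 0"
  shows "\<forall>i<r. c i = 0"
  using assms
proof (induction r)
  case 0
  then show ?case by simp
next
  case (Suc r)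
  obtain M where M: "0 < M" "(D ^^ r) (x ^ r) = of_nat M"
    using power_top_iterate by blast
  have lower_terms: "(D ^^ r) (c i * x ^ i) = 0" if "i < r" for i
    using iterate_vanish_mono[of "Suc i" "x ^ i" r] power_top_iterate[of i] that Suc.prems(1)
    by (simp add: iterate_const_left)
  have "0 = (D ^^ r) (\<Sum>i<Suc r. c i * x ^ i)"
    using Suc.prems(2) by simp
  also have "\<dots> = (D ^^ r) (c r * x ^ r)"
    using lower_terms by (simp add: iterate.sum iterate.add)
  also have "\<dots> = of_nat M * c r"
    using Suc.prems(1) M(2) by (simp add: iterate_const_left mult_of_nat_commute)
  finally have "of_nat M * c r = 0" by simp
  then have "c r = 0" by (rule torsion_free[OF M(1)])
  with Suc show ?case by (auto simp: less_Suc_eq)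
qed

lemma power_times_vanish:
  assumes "i \<le> N" and "(D ^^ Suc N) y = 0"
  shows "(D ^^ (2 * N + 1)) (x ^ i * y) = 0"
  using leibniz_top[OF conjunct1[OF power_top_iterate] assms(2), of i] assms(1)
    iterate_vanish_mono[of "Suc (i + N)" "x ^ i * y" "2 * N + 1"]
  by simp

end

context
  assumes constants_ore: "left_ore_domain_on (constants D)"
begin

lemma constants_domain: "D a = 0 \<Longrightarrow> D b = 0 \<Longrightarrow> a * b = 0 \<Longrightarrow> a = 0 \<or> b = 0"
  using constants_ore by (auto simp: left_ore_domain_on_def constants_def)

lemma constants_common_multiple:
  assumes "D a = 0" and "D b = 0" and "a \<noteq> 0" and "b \<noteq> 0"
  obtains s t where "D s = 0" and "D t = 0" and "s * a = t * b" and "s \<noteq> 0"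
proof -
  have "a \<in> constants D" and "b \<in> constants D"
    using assms(1,2) by (simp_all add: constants_def)
  then obtain s t where st: "s \<in> constants D" "t \<in> constants D" "s * a = t * b" "s * a \<noteq> 0"
    using constants_ore assms(3,4) unfolding left_ore_domain_on_def by blast
  moreover have "s \<noteq> 0" using st(4) by auto
  ultimately show ?thesis using that[of s t] unfolding constants_def by blast
qed

lemma zero_divisor_free:
  fixes a b :: 'a
  shows "a * b = 0 \<Longrightarrow> a = 0 \<or> b = 0"
  by (rule no_zero_divisors_from_constants[OF constants_domain])

lemma dependence_lift:
  assumes "finite J" and "j0 \<in> J"
    and st: "\<forall>j\<in>J - {j0}. D (s j) = 0 \<and> D (t j) = 0 \<and> s j \<noteq> 0"
    and c': "\<forall>j\<in>J - {j0}. D (c' j) = 0" "\<exists>j\<in>J - {j0}. c' j \<noteq> 0"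
      "(\<Sum>j\<in>J - {j0}. c' j * (s j * v j - t j * v j0)) = 0"
  shows "\<exists>c. (\<forall>j\<in>J. D (c j) = 0) \<and> (\<exists>j\<in>J. c j \<noteq> 0) \<and> (\<Sum>j\<in>J. c j * v j) = 0"
proof -
  define c where "c j = (if j = j0 then - (\<Sum>i\<in>J - {j0}. c' i * t i) else c' j * s j)" for j
  have c_j0: "c j0 = - (\<Sum>i\<in>J - {j0}. c' i * t i)"
    by (simp add: c_def)
  have c_other: "c j = c' j * s j" if "j \<noteq> j0" for j
    using that by (simp add: c_def)
  have "\<forall>j\<in>J. D (c j) = 0"
  proof
    fix j assume "j \<in> J"
    show "D (c j) = 0"
    proof (cases "j = j0")
      case True
      with st c'(1) show ?thesis by (simp add: c_j0 minus sum leibniz)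
    next
      case False
      with \<open>j \<in> J\<close> st c'(1) show ?thesis by (simp add: c_other leibniz)
    qed
  qed
  moreover have "\<exists>j\<in>J. c j \<noteq> 0"
  proof -
    obtain j where j: "j \<in> J - {j0}" "c' j \<noteq> 0" using c'(2) by blast
    then have "c' j * s j \<noteq> 0" using st c'(1) constants_domain by blast
    with j show ?thesis by (intro bexI[of _ j]) (auto simp: c_other)
  qed
  moreover have "(\<Sum>j\<in>J. c j * v j) = 0"
  proof -
    have "(\<Sum>j\<in>J. c j * v j) = c j0 * v j0 + (\<Sum>j\<in>J - {j0}. c j * v j)"
      using assms(1,2) by (rule sum.remove)
    also have "(\<Sum>j\<in>J - {j0}. c j * v j) = (\<Sum>j\<in>J - {j0}. c' j * s j * v j)"
      by (rule sum.cong) (auto simp: c_other)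
    also have "c j0 * v j0 + (\<Sum>j\<in>J - {j0}. c' j * s j * v j) =
        (\<Sum>j\<in>J - {j0}. c' j * (s j * v j - t j * v j0))"
      by (simp add: c_j0 right_diff_distrib sum_subtractf sum_distrib_right mult.assoc)
    finally show ?thesis using c'(3) by simp
  qed
  ultimately show ?thesis by (intro exI[of _ c]) simp
qed

(* If some v_j0 has
   top iterate of order n, the Ore condition in C gives constants with
   s_j D^n v_j = t_j D^n v_j0, and the elements s_j v_j - t_j v_j0 are killed by D^n. *)
lemma constant_dependence:
  assumes "finite J" and "n < card J" and "\<forall>j\<in>J. (D ^^ n) (v j) = 0"
  shows "\<exists>c. (\<forall>j\<in>J. D (c j) = 0) \<and> (\<exists>j\<in>J. c j \<noteq> 0) \<and> (\<Sum>j\<in>J. c j * v j) = 0"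
  using assms
proof (induction n arbitrary: J v)
  case 0
  then have "J \<noteq> {}" by auto
  with 0 show ?case by (intro exI[of _ "\<lambda>_. 1"]) auto
next
  case (Suc n)
  show ?case
  proof (cases "\<forall>j\<in>J. (D ^^ n) (v j) = 0")
    case True
    with Suc show ?thesis by simp
  next
    case False
    then obtain j0 where j0: "j0 \<in> J" "(D ^^ n) (v j0) \<noteq> 0" by blast
    have "\<exists>s t. D s = 0 \<and> D t = 0 \<and> s \<noteq> 0 \<and> s * (D ^^ n) (v j) = t * (D ^^ n) (v j0)"
      if "j \<in> J" for j
    proof (cases "(D ^^ n) (v j) = 0")
      case True
      then show ?thesis by (intro exI[of _ 1] exI[of _ 0]) simp
    next
      case False
      have "D ((D ^^ n) (v j)) = 0" and "D ((D ^^ n) (v j0)) = 0"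
        using that j0(1) Suc.prems(3) by auto
      from constants_common_multiple[OF this False j0(2)] show ?thesis by blast
    qed
    then obtain s t where st: "\<forall>j\<in>J. D (s j) = 0 \<and> D (t j) = 0 \<and> s j \<noteq> 0 \<and>
        s j * (D ^^ n) (v j) = t j * (D ^^ n) (v j0)"
      by metis
    have "\<forall>j\<in>J - {j0}. (D ^^ n) (s j * v j - t j * v j0) = 0"
      using st by (simp add: iterate.diff iterate_const_left)
    moreover have "n < card (J - {j0})" using Suc.prems(1,2) j0(1) by simp
    ultimately obtain c' where c': "\<forall>j\<in>J - {j0}. D (c' j) = 0" "\<exists>j\<in>J - {j0}. c' j \<noteq> 0"
      "(\<Sum>j\<in>J - {j0}. c' j * (s j * v j - t j * v j0)) = 0"
      using Suc.IH[of "J - {j0}" "\<lambda>j. s j * v j - t j * v j0"] Suc.prems(1) by auto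
    have "\<forall>j\<in>J - {j0}. D (s j) = 0 \<and> D (t j) = 0 \<and> s j \<noteq> 0"
      using st by blast
    from dependence_lift[OF Suc.prems(1) j0(1) this c'] show ?thesis .
  qed
qed

(* The Ore condition of A: the 2(N+1) elements x^i a, x^i b are killed by D^(2N+1), so they
   are dependent over C, which gives a common left multiple s a = t b. *)
lemma common_left_multiple:
  fixes a b :: 'a
  assumes Dx: "D x = 1" and a: "a \<noteq> 0" and b: "b \<noteq> 0"
  shows "\<exists>s t. s * a = t * b \<and> s * a \<noteq> 0"
proof -
  obtain p q where "(D ^^ p) a = 0" "(D ^^ q) b = 0" using nilpotent[of a] nilpotent[of b] by blast
  define N where "N = p + q"
  have aN: "(D ^^ Suc N) a = 0" and bN: "(D ^^ Suc N) b = 0"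
    using \<open>(D ^^ p) a = 0\<close> \<open>(D ^^ q) b = 0\<close> iterate_vanish_mono by (auto simp: N_def)
  define v where "v j = x ^ fst j * (if snd j then a else b)" for j
  have "\<forall>j\<in>{..N} \<times> UNIV. (D ^^ (2 * N + 1)) (v j) = 0"
    using power_times_vanish[OF Dx _ aN] power_times_vanish[OF Dx _ bN] by (auto simp: v_def)
  then obtain c where c: "\<forall>j\<in>{..N} \<times> UNIV. D (c j) = 0" "\<exists>j\<in>{..N} \<times> UNIV. c j \<noteq> 0"
    "(\<Sum>j\<in>{..N} \<times> UNIV. c j * v j) = 0"
    using constant_dependence[of "{..N} \<times> UNIV" "2 * N + 1" v]
    by (auto simp: card_cartesian_product)
  define s where "s = (\<Sum>i\<le>N. c (i, True) * x ^ i)"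
  define t where "t = (\<Sum>i\<le>N. c (i, False) * x ^ i)"
  have relation: "s * a = (- t) * b"
    using c(3) sum_bool_pairs[where c = c and N = N and x = x and a = a and b = b]
    by (simp add: v_def s_def t_def eq_neg_iff_add_eq_0)
  have "s \<noteq> 0 \<or> t \<noteq> 0"
  proof (rule ccontr)
    assume "\<not> (s \<noteq> 0 \<or> t \<noteq> 0)"
    then have "\<forall>i<Suc N. c (i, y) = 0" for y
      using powers_independent[OF Dx, of "Suc N" "\<lambda>i. c (i, y)"] c(1)
      by (cases y) (auto simp: s_def t_def lessThan_Suc_atMost)
    with c(2) show False by (auto simp: less_Suc_eq_le)
  qed
  then have "s * a \<noteq> 0"
    using zero_divisor_free[of s a] zero_divisor_free[of "- t" b] relation a b by auto
  with relation show ?thesis by blast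
qed

end

lemma left_ore_domain_on_constantsI:
  assumes "(1::'a) \<noteq> 0"
    and "\<And>a b. D a = 0 \<Longrightarrow> D b = 0 \<Longrightarrow> a * b = 0 \<Longrightarrow> a = 0 \<or> b = 0"
    and "\<And>a b. D a = 0 \<Longrightarrow> D b = 0 \<Longrightarrow> a \<noteq> 0 \<Longrightarrow> b \<noteq> 0 \<Longrightarrow>
           \<exists>s t. D s = 0 \<and> D t = 0 \<and> s * a = t * b \<and> s * a \<noteq> 0"
  shows "left_ore_domain_on (constants D)"
  using assms unfolding left_ore_domain_on_def constants_def by blast

lemma ore_from_constants:
  assumes "left_ore_domain_on (constants D)" and "D x = 1"
  shows "left_ore_domain_on (UNIV :: 'a set)"
proof -
  have "(1::'a) \<noteq> 0"
    using assms(1) unfolding left_ore_domain_on_def by blast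
  moreover have "a * b = 0 \<Longrightarrow> a = 0 \<or> b = 0" for a b :: 'a
    by (rule zero_divisor_free[OF assms(1)])
  moreover have "a \<noteq> 0 \<Longrightarrow> b \<noteq> 0 \<Longrightarrow> \<exists>s t. s * a = t * b \<and> s * a \<noteq> 0" for a b :: 'a
    by (rule common_left_multiple[OF assms])
  ultimately show ?thesis unfolding left_ore_domain_on_def by blast
qed

lemma constants_ore_from_ore:
  assumes ore: "left_ore_domain_on (UNIV :: 'a set)"
  shows "left_ore_domain_on (constants D)"
proof (rule left_ore_domain_on_constantsI)
  have domain: "a * b = 0 \<Longrightarrow> a = 0 \<or> b = 0" for a b :: 'a
    using ore unfolding left_ore_domain_on_def by blast
  show "(1::'a) \<noteq> 0" using ore unfolding left_ore_domain_on_def by blast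
  show "a = 0 \<or> b = 0" if "D a = 0" "D b = 0" "a * b = 0" for a b
    using domain[OF that(3)] .
  show "\<exists>s t. D s = 0 \<and> D t = 0 \<and> s * a = t * b \<and> s * a \<noteq> 0"
    if ab: "D a = 0" "D b = 0" "a \<noteq> 0" "b \<noteq> 0" for a b
  proof -
    obtain s t where "s * a = t * b" "s * a \<noteq> 0"
      using ore ab(3,4) unfolding left_ore_domain_on_def by blast
    with ab domain show ?thesis
      by (intro constant_coefficients[of s]) auto
  qed
qed

lemma dop_act_single [simp]: "dop_act D [a] y = a * y"
  by (simp add: dop_act_def)

lemma dop_act_zero [simp]: "dop_act D cs 0 = 0"
  by (simp add: dop_act_def)

lemma dop_act_D: "dop_act D [0, 1] y = D y"
  by (simp add: dop_act_def eval_nat_numeral)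

lemma dop_act_mult_const: "D d = 0 \<Longrightarrow> dop_act D cs (v * d) = dop_act D cs v * d"
  by (simp add: dop_act_def sum_distrib_right iterate_const_right mult.assoc)

lemma dsubmodule_mult: "dsubmodule D N \<Longrightarrow> y \<in> N \<Longrightarrow> a * y \<in> N"
  unfolding dsubmodule_def by (metis dop_act_single)

lemma dsubmodule_iterate: "dsubmodule D N \<Longrightarrow> y \<in> N \<Longrightarrow> (D ^^ n) y \<in> N"
  by (induction n) (auto simp: dsubmodule_def dop_act_D[symmetric])

lemma right_multiples_dsubmodule:
  assumes "D d = 0"
  shows "dsubmodule D (range (\<lambda>y. y * d))"
  unfolding dsubmodule_def
proof (intro conjI ballI allI)
  show "0 \<in> range (\<lambda>y. y * d)" by (metis mult_zero_left rangeI)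
  show "p + q \<in> range (\<lambda>y. y * d)" if "p \<in> range (\<lambda>y. y * d)" "q \<in> range (\<lambda>y. y * d)" for p q
    using that by (auto simp: distrib_right[symmetric])
  show "dop_act D cs p \<in> range (\<lambda>y. y * d)" if "p \<in> range (\<lambda>y. y * d)" for cs p
    using that dop_act_mult_const[OF assms] by auto
qed

lemma right_annihilator_dsubmodule:
  assumes "D d = 0"
  shows "dsubmodule D {y. y * d = 0}"
  unfolding dsubmodule_def
proof (intro conjI ballI allI)
  show "dop_act D cs p \<in> {y. y * d = 0}" if "p \<in> {y. y * d = 0}" for cs p
    using that dop_act_mult_const[OF assms, of cs p] by simp
qed (auto simp: distrib_right)

lemma dmod_hom_right_mult: "dmod_hom D f \<Longrightarrow> f a = a * f 1"
  unfolding dmod_hom_def by (metis dop_act_single mult.right_neutral)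

lemma dmod_hom_one_constant:
  assumes "dmod_hom D f"
  shows "D (f 1) = 0"
proof -
  have "f (dop_act D [0, 1] 1) = dop_act D [0, 1] (f 1)"
    using assms unfolding dmod_hom_def by blast
  moreover have "f 0 = 0" using dmod_hom_right_mult[OF assms, of 0] by simp
  ultimately show ?thesis by (simp add: dop_act_D)
qed

(* A nonzero submodule contains a nonzero constant, namely a top iterate. *)
lemma dsubmodule_constant:
  assumes "dsubmodule D N" and "N \<noteq> {0}"
  obtains c where "c \<in> N" and "c \<noteq> 0" and "D c = 0"
proof -
  obtain v where v: "v \<in> N" "v \<noteq> 0" using assms by (auto simp: dsubmodule_def)
  obtain m where "(D ^^ Suc m) v = 0" "(D ^^ m) v \<noteq> 0"
    using top_iterate[OF v(2)] .
  then show ?thesis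
    using that[of "(D ^^ m) v"] dsubmodule_iterate[OF assms(1) v(1)] by simp
qed

lemma right_mult_embeds_into_factor:
  assumes "D a = 0" and "dsubmodule D N" and "\<forall>y. y * a \<in> N \<longrightarrow> y = 0"
  shows "embeds_into_factor D N"
  unfolding embeds_into_factor_def
proof (intro exI[of _ "\<lambda>y. y * a"] conjI allI impI)
  have "0 \<in> N" using assms(2) by (simp add: dsubmodule_def)
  then show "(x + y) * a - (x * a + y * a) \<in> N" "dop_act D cs x * a - dop_act D cs (x * a) \<in> N"
    for x y cs
    by (simp_all add: distrib_right dop_act_mult_const[OF assms(1)])
qed (use assms(3) in blast)

lemma embeds_into_nonzero_dsubmodule:
  assumes domain: "\<And>a b::'a. a * b = 0 \<Longrightarrow> a = 0 \<or> b = 0"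
    and "dsubmodule D N" and "N \<noteq> {0}"
  shows "embeds_into_sub D N"
proof -
  obtain c where c: "c \<in> N" "c \<noteq> 0" "D c = 0"
    using dsubmodule_constant[OF assms(2,3)] .
  have "dmod_hom D (\<lambda>a. a * c)"
    using dop_act_mult_const[OF c(3)] by (simp add: dmod_hom_def distrib_right)
  moreover have "inj (\<lambda>a. a * c)"
  proof (rule injI)
    fix a b assume "a * c = b * c"
    then have "(a - b) * c = 0" by (simp add: left_diff_distrib)
    with domain[of "a - b" c] c(2) show "a = b" by simp
  qed
  moreover have "range (\<lambda>a. a * c) \<subseteq> N"
    using dsubmodule_mult[OF assms(2) c(1)] by auto
  ultimately show ?thesis unfolding embeds_into_sub_def by blast
qed

(* If A satisfies the Ore condition, A does not embed into A/N for a nonzero submodule N: an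
   embedding is y |-> y u modulo N, and an Ore relation s u = t c with c a nonzero
   constant in N puts the image of s ~= 0 into N. *)
lemma no_embedding_into_factor:
  assumes ore: "\<And>a b::'a. a \<noteq> 0 \<Longrightarrow> b \<noteq> 0 \<Longrightarrow> \<exists>s t. s * a = t * b \<and> s * a \<noteq> 0"
    and N: "dsubmodule D N" "N \<noteq> {0}"
  shows "\<not> embeds_into_factor D N"
proof
  assume "embeds_into_factor D N"
  then obtain f where f_dop: "\<forall>cs x. f (dop_act D cs x) - dop_act D cs (f x) \<in> N"
    and f_inj: "\<forall>x. f x \<in> N \<longrightarrow> x = 0"
    unfolding embeds_into_factor_def by blast
  have f_mult: "f a - a * f 1 \<in> N" for a
    using f_dop[rule_format, of "[a]" 1] by simp
  obtain c where c: "c \<in> N" "c \<noteq> 0" "D c = 0"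
    using dsubmodule_constant[OF N] .
  show False
  proof (cases "f 1 = 0")
    case True
    then have "f 1 \<in> N" using N(1) by (simp add: dsubmodule_def)
    then have "(1::'a) = 0" using f_inj by blast
    then have "c = 0" by (metis mult_1 mult_zero_left)
    with c(2) show False ..
  next
    case False
    then obtain s t where st: "s * f 1 = t * c" "s * f 1 \<noteq> 0"
      using ore c(2) by blast
    have "(f s - s * f 1) + t * c \<in> N"
      using f_mult dsubmodule_mult[OF N(1) c(1)] N(1) by (simp add: dsubmodule_def)
    then have "f s \<in> N" using st(1) by simp
    then have "s = 0" using f_inj by blast
    with st(2) show False by simp
  qed
qed

lemma critically_compressible_from_ore:
  assumes "left_ore_domain_on (UNIV :: 'a set)"
  shows "critically_compressible D"
proof -
  have nontrivial: "(1::'a) \<noteq> 0"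
    and domain: "\<And>a b::'a. a * b = 0 \<Longrightarrow> a = 0 \<or> b = 0"
    and ore: "\<And>a b::'a. a \<noteq> 0 \<Longrightarrow> b \<noteq> 0 \<Longrightarrow> \<exists>s t. s * a = t * b \<and> s * a \<noteq> 0"
    using assms unfolding left_ore_domain_on_def by blast+
  show ?thesis unfolding critically_compressible_def
    using nontrivial embeds_into_nonzero_dsubmodule[OF domain] no_embedding_into_factor[OF ore]
    by blast
qed

context
  assumes cc: "critically_compressible D"
begin

(* Under (c), nonzero constants d are regular: otherwise A would embed into A/K for the
   nonzero annihilator K of d, via an embedding of A into A d. *)
lemma nonzero_constants_regular:
  assumes d: "D d = 0" "d \<noteq> 0" and "a * d = 0"
  shows "a = 0"
proof (rule ccontr)
  assume "a \<noteq> 0"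
  define K where "K = {y. y * d = 0}"
  define M where "M = range (\<lambda>y. y * d)"
  have K: "dsubmodule D K" "K \<noteq> {0}"
    using right_annihilator_dsubmodule[OF d(1)] \<open>a \<noteq> 0\<close> assms(3) by (auto simp: K_def)
  have "d \<in> M" unfolding M_def by (metis mult_1 rangeI)
  then have M: "dsubmodule D M" "M \<noteq> {0}"
    using right_multiples_dsubmodule[OF d(1)] d(2) by (auto simp: M_def)
  obtain f where f: "dmod_hom D f" "inj f" "range f \<subseteq> M"
    using cc M unfolding critically_compressible_def embeds_into_sub_def by blast
  define e where "e = f 1"
  have De: "D e = 0" using dmod_hom_one_constant[OF f(1)] by (simp add: e_def)
  obtain h where h: "e = h * d" using f(3) unfolding e_def M_def by auto
  have "embeds_into_factor D K"
    unfolding embeds_into_factor_def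
  proof (intro exI[of _ "\<lambda>y. y * h"] conjI allI impI)
    show "(p + q) * h - (p * h + q * h) \<in> K" for p q by (simp add: distrib_right K_def)
    show "dop_act D cs y * h - dop_act D cs (y * h) \<in> K" for cs y
    proof -
      have "dop_act D cs (y * h) * d = dop_act D cs (y * e)"
        using dop_act_mult_const[OF d(1), of cs "y * h"] by (simp add: h mult.assoc)
      also have "\<dots> = dop_act D cs y * h * d"
        using dop_act_mult_const[OF De] by (simp add: h mult.assoc)
      finally show ?thesis by (simp add: K_def left_diff_distrib)
    qed
    show "y = 0" if "y * h \<in> K" for y
    proof -
      have "f y = f 0"
        using that dmod_hom_right_mult[OF f(1), of y] dmod_hom_right_mult[OF f(1), of 0]
        by (simp add: K_def e_def[symmetric] h mult.assoc)
      with f(2) show ?thesis by (simp add: inj_def)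
    qed
  qed
  with cc K show False unfolding critically_compressible_def by blast
qed

(* (c) implies (a): for constants a, b ~= 0, A does not embed into A/(A b) by right
   multiplication by a, which gives s a = t b with s ~= 0. *)
lemma constants_ore_from_critically_compressible: "left_ore_domain_on (constants D)"
proof (rule left_ore_domain_on_constantsI)
  show "(1::'a) \<noteq> 0"
  proof
    assume "(1::'a) = 0"
    then have "y = 0" for y :: 'a by (metis mult_1 mult_zero_left)
    with cc show False unfolding critically_compressible_def by blast
  qed
  show "a = 0 \<or> b = 0" if "D a = 0" "D b = 0" "a * b = 0" for a b
    using nonzero_constants_regular that(2,3) by blast
  show "\<exists>s t. D s = 0 \<and> D t = 0 \<and> s * a = t * b \<and> s * a \<noteq> 0"
    if ab: "D a = 0" "D b = 0" "a \<noteq> 0" "b \<noteq> 0" for a b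
  proof -
    define N where "N = range (\<lambda>y. y * b)"
    have "b \<in> N" unfolding N_def by (metis mult_1 rangeI)
    then have N: "dsubmodule D N" "N \<noteq> {0}"
      using right_multiples_dsubmodule[OF ab(2)] ab(4) by (auto simp: N_def)
    then have "\<not> embeds_into_factor D N"
      using cc unfolding critically_compressible_def by blast
    then obtain s where "s * a \<in> N" "s \<noteq> 0"
      using right_mult_embeds_into_factor[OF ab(1) N(1)] by blast
    then obtain t where "s * a = t * b" unfolding N_def by blast
    with \<open>s \<noteq> 0\<close> ab show ?thesis
      by (intro constant_coefficients) (auto dest: nonzero_constants_regular)
  qed
qed

end

end

lemma lnd_of_k_derivation:
  fixes smult :: "'k::field_char_0 \<Rightarrow> 'a::ring_1 \<Rightarrow> 'a"
  assumes "k_algebra smult" and "k_derivation smult \<delta>" and "locally_nilpotent \<delta>"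
  shows "lnd \<delta>"
proof unfold_locales
  show "\<delta> (a + b) = \<delta> a + \<delta> b" and "\<delta> (a * b) = \<delta> a * b + a * \<delta> b" for a b
    using assms(2) unfolding k_derivation_def by blast+
  show "\<exists>n>0. (\<delta> ^^ n) a = 0" for a
    using assms(3) unfolding locally_nilpotent_def by blast
  show "0 < n \<Longrightarrow> of_nat n * y = 0 \<Longrightarrow> y = 0" for n and y :: 'a
    by (rule k_algebra_torsion_free[OF assms(1)])
qed

theorem proposition3p12:
  fixes smult :: "'k::field_char_0 \<Rightarrow> 'a::ring_1 \<Rightarrow> 'a"
    and \<delta> :: "'a \<Rightarrow> 'a"
  assumes "k_algebra smult"
    and "k_derivation smult \<delta>"
    and "locally_nilpotent \<delta>"
    and "\<exists>x. \<delta> x = 1"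
  shows "(left_ore_domain_on (constants \<delta>) \<longleftrightarrow> left_ore_domain_on (UNIV :: 'a set))
       \<and> (left_ore_domain_on (UNIV :: 'a set) \<longleftrightarrow> critically_compressible \<delta>)"
proof -
  interpret lnd \<delta>
    using assms(1-3) by (rule lnd_of_k_derivation)
  obtain x where "\<delta> x = 1" using assms(4) ..
  then have "left_ore_domain_on (constants \<delta>) \<Longrightarrow> left_ore_domain_on (UNIV :: 'a set)"
    by (rule ore_from_constants[rotated])
  then show ?thesis
    using constants_ore_from_ore critically_compressible_from_ore
      constants_ore_from_critically_compressible by blast
qed

end
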